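(* Let $l$ be a prime with $l\equiv 4\pmod 5$, let $j\in\mathbb{F}_l$ with $j\neq 0,1728$, and let $a_1\in\mathbb{F}_l$ be a root of $G(x^5,j)\equiv 0\pmod l$, where $G(x,j)=(x^4-228x^3+494x^2+228x+1)^3-jx(1-11x-x^2)^5$. Then $M(a_1)\in\mathbb{F}_{l^2}\setminus\mathbb{F}_l$ for every $M\in\bar G_{60}\setminus\bar H$.
   Context: Since $l\equiv 4\pmod 5$, a primitive $5$th root of unity $\zeta$ lies in $\mathbb{F}_{l^2}\setminus\mathbb{F}_l$; put $\sqrt5=\zeta-\zeta^2-\zeta^3+\zeta^4\in\mathbb{F}_l$. Let $\bar G_{60}$ be the group of linear fractional transformations over $\mathbb{F}_{l^2}$ generated by $S(z)=\zeta z$ and $T(z)=\dfrac{-(1+\sqrt5)z+2}{2z+1+\sqrt5}$ (it is isomorphic to $A_5$; it is the reduction of the icosahedral group $G_{60}$ defined by the same formulas over $\mathbb{Q}(\zeta_5)$). Let $U(z)=-1/z$ and $\bar H=\{1,T,U,TU\}\subset \bar G_{60}$. *)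

theory Defs
  imports Main "HOL-Computational_Algebra.Primes"
begin

text \<open>A 2x2 matrix (a,b,c,d) represents the linear fractional transformation
  z \<mapsto> (a z + b)/(c z + d) on the projective line; None stands for the point at infinity.\<close>

type_synonym 'a mat2 = "'a \<times> 'a \<times> 'a \<times> 'a"

fun mmul :: "'a::comm_ring_1 mat2 \<Rightarrow> 'a mat2 \<Rightarrow> 'a mat2" where
  "mmul (a,b,c,d) (e,f,g,h) = (a*e + b*g, a*f + b*h, c*e + d*g, c*f + d*h)"

fun smul2 :: "'a::comm_ring_1 \<Rightarrow> 'a mat2 \<Rightarrow> 'a mat2" where
  "smul2 k (a,b,c,d) = (k*a, k*b, k*c, k*d)"

text \<open>Two matrices define the same linear fractional transformation iff they are proportional.\<close>
definition proj_eq :: "'a::field mat2 \<Rightarrow> 'a mat2 \<Rightarrow> bool" where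
  "proj_eq M N \<longleftrightarrow> (\<exists>k. k \<noteq> 0 \<and> M = smul2 k N)"

fun mob_app :: "'a::field mat2 \<Rightarrow> 'a \<Rightarrow> 'a option" where
  "mob_app (a,b,c,d) z = (if c*z + d = 0 then None else Some ((a*z + b) / (c*z + d)))"

definition sqrt5 :: "'a::field \<Rightarrow> 'a" where
  "sqrt5 \<zeta> = \<zeta> - \<zeta>^2 - \<zeta>^3 + \<zeta>^4"

definition Smat :: "'a::field \<Rightarrow> 'a mat2" where
  "Smat \<zeta> = (\<zeta>, 0, 0, 1)"

definition Tmat :: "'a::field \<Rightarrow> 'a mat2" where
  "Tmat \<zeta> = (-(1 + sqrt5 \<zeta>), 2, 2, 1 + sqrt5 \<zeta>)"

definition Umat :: "'a::field mat2" where
  "Umat = (0, -1, 1, 0)"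

definition Imat :: "'a::field mat2" where
  "Imat = (1, 0, 0, 1)"

text \<open>Matrices representing the elements of the group generated by S and T.
  Since that group is finite, the monoid generated by S and T is the whole group.\<close>
inductive_set G60mats :: "'a::field \<Rightarrow> 'a mat2 set" for \<zeta> where
  G60_id: "Imat \<in> G60mats \<zeta>"
| G60_S: "M \<in> G60mats \<zeta> \<Longrightarrow> mmul M (Smat \<zeta>) \<in> G60mats \<zeta>"
| G60_T: "M \<in> G60mats \<zeta> \<Longrightarrow> mmul M (Tmat \<zeta>) \<in> G60mats \<zeta>"

definition Hmats :: "'a::field \<Rightarrow> 'a mat2 set" where
  "Hmats \<zeta> = {Imat, Tmat \<zeta>, Umat, mmul (Tmat \<zeta>) Umat}"

definition Fprime :: "'a::field set" where
  "Fprime = range of_int"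

definition Gpol :: "'a::field \<Rightarrow> 'a \<Rightarrow> 'a" where
  "Gpol x j = (x^4 - 228*x^3 + 494*x^2 + 228*x + 1)^3 - j*x*(1 - 11*x - x^2)^5"

end

theory Submission
  imports Defs
begin

(* Klein's forms f, h, t of degrees 12, 20, 30 (vanishing at the vertices, face
   centres and edge midpoints of the icosahedron) are covariants of G60: f (M v) = (det M)^6 f v,
   h (M v) = (det M)^10 h v, t (M v) = (det M)^15 t v, and t^2 = h^3 + 1728 f^5.  The point
   v = (a1 : 1) lies on the fibre h^3 + j f^5 = 0.  If M(a1) were in F_l, then applying the
   Frobenius, which acts on G60 as conjugation by U, shows that g = M^-1 U M U fixes v.
   Comparing weights at a fixed point on a fibre with j <> 0, 1728 forces the eigenvalue mu to
   satisfy mu^2 = det g, so g is scalar or parabolic: (tr g)^2 = 4 det g.  On the other hand,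
   an exact enumeration of G60 over Z[zeta5] shows that for M outside H the element g has order
   2, 3 or 5, whence (tr g)^2 <> 4 det g in characteristic l <> 2, 3, 5. *)

lemma of_nat_power_CHAR:
  assumes "prime CHAR('a::comm_semiring_1)"
  shows "(of_nat n :: 'a) ^ CHAR('a) = of_nat n"
proof (induction n)
  case 0
  show ?case using prime_gt_0_nat[OF assms] by (simp add: power_0_left)
next
  case (Suc n)
  then show ?case using freshmans_dream[OF assms refl, of 1 "of_nat n"] by simp
qed

lemma of_int_power_CHAR:
  assumes "prime CHAR('a::comm_ring_1)"
  shows "(of_int k :: 'a) ^ CHAR('a) = of_int k"
proof (cases "k \<ge> 0")
  case True
  then show ?thesis using of_nat_power_CHAR[OF assms, of "nat k"] by simp
next
  case False
  then have "k = - int (nat (- k))" by simp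
  then show ?thesis
    using of_nat_power_CHAR[OF assms, of "nat (- k)"] minus_power_prime_CHAR[OF refl assms]
    by (metis of_int_minus of_int_of_nat_eq)
qed

lemma of_nat_prime_neq_0:
  assumes "prime CHAR('a::semiring_1)" "prime p" "p \<noteq> CHAR('a)"
  shows "(of_nat p :: 'a) \<noteq> 0"
  using assms primes_dvd_imp_eq by (auto simp: of_nat_eq_0_iff_char_dvd)

fun mat2_app :: "'a::comm_ring_1 mat2 \<Rightarrow> 'a \<times> 'a \<Rightarrow> 'a \<times> 'a" where
  "mat2_app (a, b, c, d) (x, y) = (a * x + b * y, c * x + d * y)"

fun scale2 :: "'a::comm_ring_1 \<Rightarrow> 'a \<times> 'a \<Rightarrow> 'a \<times> 'a" where
  "scale2 k (x, y) = (k * x, k * y)"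

fun mat2_det :: "'a::comm_ring_1 mat2 \<Rightarrow> 'a" where
  "mat2_det (a, b, c, d) = a * d - b * c"

fun mat2_trace :: "'a::comm_ring_1 mat2 \<Rightarrow> 'a" where
  "mat2_trace (a, b, c, d) = a + d"

fun mat2_adj :: "'a::comm_ring_1 mat2 \<Rightarrow> 'a mat2" where
  "mat2_adj (a, b, c, d) = (d, - b, - c, a)"

fun mat2_map :: "('a \<Rightarrow> 'b) \<Rightarrow> 'a mat2 \<Rightarrow> 'b mat2" where
  "mat2_map f (a, b, c, d) = (f a, f b, f c, f d)"

lemma mmul_assoc: "mmul (mmul A B) C = mmul A (mmul B C)"
  by (cases A; cases B; cases C) (simp add: algebra_simps)

lemma mmul_smul2_left: "mmul (smul2 k A) B = smul2 k (mmul A B)"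
  by (cases A; cases B) (simp add: algebra_simps)

lemma mmul_smul2_right: "mmul A (smul2 k B) = smul2 k (mmul A B)"
  by (cases A; cases B) (simp add: algebra_simps)

lemma smul2_smul2: "smul2 a (smul2 b A) = smul2 (a * b) A"
  by (cases A) (simp add: algebra_simps)

lemma smul2_1 [simp]: "smul2 1 A = A"
  by (cases A) simp

lemma smul2_cancel_left:
  fixes a :: "'a::field"
  assumes "a \<noteq> 0" "smul2 a A = smul2 b B"
  shows "A = smul2 (b / a) B"
proof -
  have "A = smul2 (1 / a) (smul2 a A)" using assms(1) by (simp add: smul2_smul2)
  also have "\<dots> = smul2 (b / a) B" unfolding assms(2) smul2_smul2 by simp
  finally show ?thesis .
qed

lemma mat2_app_mmul: "mat2_app (mmul A B) v = mat2_app A (mat2_app B v)"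
  by (cases A; cases B; cases v) (simp add: algebra_simps)

lemma mat2_app_smul2: "mat2_app (smul2 k A) v = scale2 k (mat2_app A v)"
  by (cases A; cases v) (simp add: algebra_simps)

lemma mat2_app_scale2: "mat2_app A (scale2 k v) = scale2 k (mat2_app A v)"
  by (cases A; cases v) (simp add: algebra_simps)

lemma scale2_scale2: "scale2 a (scale2 b v) = scale2 (a * b) v"
  by (cases v) (simp add: algebra_simps)

lemma scale2_cancel_left:
  fixes a :: "'a::field"
  assumes "a \<noteq> 0" "scale2 a v = scale2 b w"
  shows "v = scale2 (b / a) w"
proof -
  have "v = scale2 (1 / a) (scale2 a v)" using assms(1) by (cases v) simp
  also have "\<dots> = scale2 (b / a) w" unfolding assms(2) scale2_scale2 by simp
  finally show ?thesis .
qed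

lemma mat2_app_adj: "mat2_app (mat2_adj A) (mat2_app A v) = scale2 (mat2_det A) v"
  by (cases A; cases v) (simp add: algebra_simps)

lemma mat2_app_adj_right: "mat2_app A (mat2_app (mat2_adj A) v) = scale2 (mat2_det A) v"
  by (cases A; cases v) (simp add: algebra_simps)

lemma mat2_det_mmul: "mat2_det (mmul A B) = mat2_det A * mat2_det B"
  by (cases A; cases B) (simp add: algebra_simps)

lemma mat2_det_adj: "mat2_det (mat2_adj A) = mat2_det A"
  by (cases A) (simp add: algebra_simps)

lemma mat2_trace_smul2: "mat2_trace (smul2 k A) = k * mat2_trace A"
  by (cases A) (simp add: algebra_simps)

lemma mat2_det_smul2: "mat2_det (smul2 k A) = k^2 * mat2_det A"
  by (cases A) (simp add: algebra_simps power2_eq_square)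

lemma mat2_map_mmul:
  assumes "\<And>x y. f (x + y) = f x + f y" "\<And>x y. f (x * y) = f x * f y"
  shows "mat2_map f (mmul A B) = mmul (mat2_map f A) (mat2_map f B)"
  by (cases A; cases B) (simp add: assms)

lemma mob_app_eq_Some:
  fixes A :: "'a::field mat2"
  assumes "mat2_app A (z, 1) = (p, q)" "q \<noteq> 0"
  shows "mob_app A z = Some (p / q)"
  using assms by (cases A) simp

lemma eigenvalue_char_poly:
  fixes A :: "'a::idom mat2"
  assumes "mat2_app A v = scale2 \<mu> v" "v \<noteq> (0, 0)"
  shows "\<mu>^2 - mat2_trace A * \<mu> + mat2_det A = 0"
proof -
  obtain a b c d where A: "A = (a, b, c, d)" by (cases A)
  obtain x y where v: "v = (x, y)" by (cases v)
  have e: "a * x + b * y = \<mu> * x" "c * x + d * y = \<mu> * y"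
    using assms(1) unfolding A v by simp_all
  have "(\<mu>^2 - (a + d) * \<mu> + (a * d - b * c)) * x = 0"
    "(\<mu>^2 - (a + d) * \<mu> + (a * d - b * c)) * y = 0"
    using e by algebra+
  then show ?thesis using assms(2) unfolding A v by auto
qed

section \<open>Klein's forms and the fibres of the icosahedral quotient\<close>

(* Klein's invariants f, H, T of the icosahedron, with face_form = - H. *)
fun vertex_form :: "'a::comm_ring_1 \<times> 'a \<Rightarrow> 'a" where
  "vertex_form (x, y) = x^11 * y + 11 * x^6 * y^6 - x * y^11"

fun face_form :: "'a::comm_ring_1 \<times> 'a \<Rightarrow> 'a" where
  "face_form (x, y) = x^20 - 228 * x^15 * y^5 + 494 * x^10 * y^10 + 228 * x^5 * y^15 + y^20"

fun edge_form :: "'a::comm_ring_1 \<times> 'a \<Rightarrow> 'a" where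
  "edge_form (x, y) =
     x^30 + y^30 + 522 * (x^25 * y^5 - x^5 * y^25) - 10005 * (x^20 * y^10 + x^10 * y^20)"

lemmas [simp del] = vertex_form.simps face_form.simps edge_form.simps

lemma edge_form_squared:
  fixes v :: "'a::idom \<times> 'a"
  shows "edge_form v ^ 2 = face_form v ^ 3 + 1728 * vertex_form v ^ 5"
proof (cases v)
  case (Pair x y)
  show ?thesis unfolding Pair edge_form.simps face_form.simps vertex_form.simps by algebra
qed

lemma vertex_form_scale2:
  fixes v :: "'a::idom \<times> 'a"
  shows "vertex_form (scale2 k v) = k^12 * vertex_form v"
proof (cases v)
  case (Pair x y)
  show ?thesis unfolding Pair scale2.simps vertex_form.simps by algebra
qed

lemma face_form_scale2:
  fixes v :: "'a::idom \<times> 'a"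
  shows "face_form (scale2 k v) = k^20 * face_form v"
proof (cases v)
  case (Pair x y)
  show ?thesis unfolding Pair scale2.simps face_form.simps by algebra
qed

lemma edge_form_scale2:
  fixes v :: "'a::idom \<times> 'a"
  shows "edge_form (scale2 k v) = k^30 * edge_form v"
proof (cases v)
  case (Pair x y)
  show ?thesis unfolding Pair scale2.simps edge_form.simps by algebra
qed

lemma face_form_at_vertex_form_zero:
  fixes x y :: "'a::idom"
  assumes "vertex_form (x, y) = 0" "(x, y) \<noteq> (0, 0)" "(5::'a) \<noteq> 0"
  shows "face_form (x, y) \<noteq> 0"
proof -
  let ?g = "x^10 + 11 * x^5 * y^5 - y^10"
  have f: "vertex_form (x, y) = x * y * ?g"
    unfolding vertex_form.simps by algebra
  have h: "face_form (x, y) = ?g * (x^10 - 239 * x^5 * y^5 - y^10) + 5^5 * x^10 * y^10"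
    unfolding face_form.simps by algebra
  consider "x = 0" | "y = 0" | "x \<noteq> 0" "y \<noteq> 0" "?g = 0"
    using assms(1) unfolding f by auto
  then show ?thesis
  proof cases
    case 1
    then show ?thesis using assms(2) by (simp add: face_form.simps)
  next
    case 2
    then show ?thesis using assms(2) by (simp add: face_form.simps)
  next
    case 3
    then have "5^5 * x^10 * y^10 \<noteq> 0"
      using assms(3) by (intro no_zero_divisors power_not_zero)
    then show ?thesis using 3(3) unfolding h by simp
  qed
qed

definition klein_fibre :: "'a::field \<Rightarrow> 'a \<times> 'a \<Rightarrow> bool" where
  "klein_fibre j v \<longleftrightarrow> v \<noteq> (0, 0) \<and> face_form v ^ 3 + j * vertex_form v ^ 5 = 0"

lemma klein_fibre_forms_nonzero:
  fixes j :: "'a::field"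
  assumes "klein_fibre j v" "j \<noteq> 0" "(5::'a) \<noteq> 0"
  shows "vertex_form v \<noteq> 0" "face_form v \<noteq> 0"
proof -
  obtain x y where v: "v = (x, y)" by (cases v)
  have fibre: "v \<noteq> (0, 0)" "face_form v ^ 3 + j * vertex_form v ^ 5 = 0"
    using assms(1) unfolding klein_fibre_def by auto
  show f: "vertex_form v \<noteq> 0"
  proof
    assume "vertex_form v = 0"
    then have "face_form v = 0" using fibre(2) by simp
    moreover have "face_form v \<noteq> 0"
      using face_form_at_vertex_form_zero[of x y] \<open>vertex_form v = 0\<close> fibre(1) assms(3)
      unfolding v by blast
    ultimately show False by contradiction
  qed
  show "face_form v \<noteq> 0"
    using fibre(2) f assms(2) by auto
qed

lemma klein_fibre_snd_nonzero:
  assumes "klein_fibre j (x, y)"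
  shows "y \<noteq> 0"
proof
  assume "y = 0"
  then have "x^60 = 0" "x \<noteq> 0"
    using assms unfolding klein_fibre_def
    by (simp_all add: face_form.simps vertex_form.simps flip: power_mult)
  then show False by simp
qed

lemma klein_fibre_iff_Gpol:
  "klein_fibre j (a, 1) \<longleftrightarrow> Gpol (a^5) j = 0"
proof -
  have "face_form (a, 1) ^ 3 + j * vertex_form (a, 1) ^ 5 = Gpol (a^5) j"
    unfolding Gpol_def by (simp add: face_form.simps vertex_form.simps; algebra)
  then show ?thesis unfolding klein_fibre_def by simp
qed

definition klein_covariant :: "'a::field mat2 \<Rightarrow> bool" where
  "klein_covariant A \<longleftrightarrow> mat2_det A \<noteq> 0 \<and>
     (\<forall>v. vertex_form (mat2_app A v) = mat2_det A ^ 6 * vertex_form v \<and>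
          face_form (mat2_app A v) = mat2_det A ^ 10 * face_form v \<and>
          edge_form (mat2_app A v) = mat2_det A ^ 15 * edge_form v)"

lemma klein_covariant_mmul:
  assumes "klein_covariant A" "klein_covariant B"
  shows "klein_covariant (mmul A B)"
proof -
  have A: "mat2_det A \<noteq> 0" "\<And>v. vertex_form (mat2_app A v) = mat2_det A ^ 6 * vertex_form v"
    "\<And>v. face_form (mat2_app A v) = mat2_det A ^ 10 * face_form v"
    "\<And>v. edge_form (mat2_app A v) = mat2_det A ^ 15 * edge_form v"
    using assms(1) unfolding klein_covariant_def by blast+
  have B: "mat2_det B \<noteq> 0" "\<And>v. vertex_form (mat2_app B v) = mat2_det B ^ 6 * vertex_form v"
    "\<And>v. face_form (mat2_app B v) = mat2_det B ^ 10 * face_form v"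
    "\<And>v. edge_form (mat2_app B v) = mat2_det B ^ 15 * edge_form v"
    using assms(2) unfolding klein_covariant_def by blast+
  show ?thesis
    unfolding klein_covariant_def mat2_app_mmul mat2_det_mmul
    by (simp only: A B power_mult_distrib mult.assoc mult_eq_0_iff simp_thms)
qed

lemma klein_covariant_adj:
  assumes "klein_covariant A"
  shows "klein_covariant (mat2_adj A)"
proof -
  let ?d = "mat2_det A"
  have d: "?d \<noteq> 0" and cov: "\<And>v. vertex_form (mat2_app A v) = ?d ^ 6 * vertex_form v \<and>
      face_form (mat2_app A v) = ?d ^ 10 * face_form v \<and>
      edge_form (mat2_app A v) = ?d ^ 15 * edge_form v"
    using assms unfolding klein_covariant_def by blast+
  have "vertex_form (mat2_app (mat2_adj A) w) = ?d ^ 6 * vertex_form w \<and>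
      face_form (mat2_app (mat2_adj A) w) = ?d ^ 10 * face_form w \<and>
      edge_form (mat2_app (mat2_adj A) w) = ?d ^ 15 * edge_form w" for w
  proof -
    define u where "u = mat2_app (mat2_adj A) w"
    have Au: "mat2_app A u = scale2 ?d w"
      unfolding u_def by (rule mat2_app_adj_right)
    have "?d ^ 6 * vertex_form u = ?d ^ 6 * (?d ^ 6 * vertex_form w)"
      "?d ^ 10 * face_form u = ?d ^ 10 * (?d ^ 10 * face_form w)"
      "?d ^ 15 * edge_form u = ?d ^ 15 * (?d ^ 15 * edge_form w)"
      using cov[of u] unfolding Au vertex_form_scale2 face_form_scale2 edge_form_scale2
      by (simp_all add: mult.assoc[symmetric] flip: power_add)
    moreover have "?d ^ 6 \<noteq> 0" "?d ^ 10 \<noteq> 0" "?d ^ 15 \<noteq> 0" using d by simp_all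
    ultimately show ?thesis unfolding u_def by (simp only: mult_left_cancel simp_thms)
  qed
  then show ?thesis using d unfolding klein_covariant_def mat2_det_adj by blast
qed

lemma klein_fibre_mat2_app:
  assumes "klein_covariant A" "klein_fibre j v"
  shows "klein_fibre j (mat2_app A v)"
proof -
  let ?d = "mat2_det A"
  have d: "?d \<noteq> 0" and cov: "vertex_form (mat2_app A v) = ?d ^ 6 * vertex_form v"
      "face_form (mat2_app A v) = ?d ^ 10 * face_form v"
    using assms(1) unfolding klein_covariant_def by blast+
  have "mat2_app A v \<noteq> (0, 0)"
  proof
    assume "mat2_app A v = (0, 0)"
    then have "scale2 ?d v = (0, 0)" using mat2_app_adj[of A v] by (cases A) simp
    then show False using d assms(2) unfolding klein_fibre_def by (cases v) simp
  qed
  moreover have "face_form (mat2_app A v) ^ 3 + j * vertex_form (mat2_app A v) ^ 5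
      = ?d ^ 30 * (face_form v ^ 3 + j * vertex_form v ^ 5)"
    unfolding cov by algebra
  ultimately show ?thesis using assms(2) unfolding klein_fibre_def by simp
qed

lemma klein_covariant_eigenvalue:
  fixes j :: "'a::field"
  assumes "klein_covariant A" "klein_fibre j v" "mat2_app A v = scale2 \<mu> v"
    and "j \<noteq> 0" "(5::'a) \<noteq> 0"
  shows "\<mu>^2 = mat2_det A \<or> \<mu>^2 = - mat2_det A"
proof -
  let ?d = "mat2_det A"
  have d: "?d \<noteq> 0" and cov: "vertex_form (mat2_app A v) = ?d ^ 6 * vertex_form v"
      "face_form (mat2_app A v) = ?d ^ 10 * face_form v"
    using assms(1) unfolding klein_covariant_def by blast+
  have f: "vertex_form v \<noteq> 0" and h: "face_form v \<noteq> 0"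
    using klein_fibre_forms_nonzero[OF assms(2,4,5)] by blast+
  define u where "u = \<mu>^2"
  have "u^6 * vertex_form v = ?d^6 * vertex_form v"
    using cov(1) unfolding assms(3) vertex_form_scale2 u_def by (simp add: power_mult[symmetric])
  then have 6: "u^6 = ?d^6" using f by simp
  have "u^10 * face_form v = ?d^10 * face_form v"
    using cov(2) unfolding assms(3) face_form_scale2 u_def by (simp add: power_mult[symmetric])
  then have 10: "u^10 = ?d^10" using h by simp
  have "u^4 * ?d^6 = u^4 * u^6" using 6 by simp
  also have "\<dots> = ?d^4 * ?d^6" using 10 by (simp flip: power_add)
  finally have 4: "u^4 = ?d^4" using d by (metis mult_right_cancel power_not_zero)
  have "u^2 * ?d^4 = u^2 * u^4" using 4 by simp
  also have "\<dots> = ?d^2 * ?d^4" using 6 by (simp flip: power_add)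
  finally have "u^2 = ?d^2" using d by (metis mult_right_cancel power_not_zero)
  then show ?thesis unfolding u_def by (simp only: power2_eq_square square_eq_iff)
qed

theorem klein_covariant_fixed_point:
  fixes j :: "'a::field"
  assumes "klein_covariant A" "klein_fibre j v" "mat2_app A v = scale2 \<mu> v"
    and "j \<noteq> 0" "j \<noteq> 1728" "(2::'a) \<noteq> 0" "(5::'a) \<noteq> 0"
  shows "mat2_trace A ^ 2 = 4 * mat2_det A"
proof -
  let ?d = "mat2_det A"
  have d: "?d \<noteq> 0" and cov: "edge_form (mat2_app A v) = ?d ^ 15 * edge_form v"
    using assms(1) unfolding klein_covariant_def by blast+
  have v: "v \<noteq> (0, 0)" using assms(2) unfolding klein_fibre_def by blast
  have "\<mu>^2 \<noteq> - ?d"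
  proof
    assume \<mu>: "\<mu>^2 = - ?d"
    have "(\<mu>^2)^15 * edge_form v = ?d^15 * edge_form v"
      using cov unfolding assms(3) edge_form_scale2 by (simp flip: power_mult)
    then have "2 * ?d^15 * edge_form v = 0" unfolding \<mu> by (simp add: algebra_simps)
    then have "edge_form v = 0" using d assms(6) by simp
    then have "face_form v ^ 3 + 1728 * vertex_form v ^ 5 = 0"
      using edge_form_squared[of v] by simp
    moreover have "face_form v ^ 3 + j * vertex_form v ^ 5 = 0"
      using assms(2) unfolding klein_fibre_def by blast
    moreover have "(j - 1728) * vertex_form v ^ 5 =
        (face_form v ^ 3 + j * vertex_form v ^ 5) - (face_form v ^ 3 + 1728 * vertex_form v ^ 5)"
      by (simp add: algebra_simps)
    ultimately have "(j - 1728) * vertex_form v ^ 5 = 0" by simp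
    then show False
      using assms(5) klein_fibre_forms_nonzero(1)[OF assms(2,4,7)] by simp
  qed
  then have \<mu>: "\<mu>^2 = ?d"
    using klein_covariant_eigenvalue[OF assms(1-4,7)] by blast
  have "\<mu>^2 - mat2_trace A * \<mu> + ?d = 0"
    using eigenvalue_char_poly[OF assms(3) v] .
  then have "mat2_trace A * \<mu> = 2 * ?d" using \<mu> by (simp add: algebra_simps)
  then have "(mat2_trace A)^2 * \<mu>^2 = (2 * ?d)^2" by (simp flip: power_mult_distrib)
  then show ?thesis using \<mu> d by (simp add: power2_eq_square)
qed

section \<open>The generators of the icosahedral group\<close>

lemma cyclotomic5:
  fixes \<zeta> :: "'a::idom"
  assumes "\<zeta>^5 = 1" "\<zeta> \<noteq> 1"
  shows "\<zeta>^4 + \<zeta>^3 + \<zeta>^2 + \<zeta> + 1 = 0"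
proof -
  have "(\<zeta> - 1) * (\<zeta>^4 + \<zeta>^3 + \<zeta>^2 + \<zeta> + 1) = \<zeta>^5 - 1" by algebra
  then show ?thesis using assms by simp
qed

lemma sqrt5_squared:
  assumes "\<zeta>^4 + \<zeta>^3 + \<zeta>^2 + \<zeta> + 1 = 0"
  shows "sqrt5 \<zeta> ^ 2 = 5"
  using assms unfolding sqrt5_def by algebra

lemma klein_covariant_Imat: "klein_covariant Imat"
  unfolding klein_covariant_def Imat_def by simp

lemma klein_covariant_Umat: "klein_covariant Umat"
proof -
  have "vertex_form (- y, x) = vertex_form (x, y)" "face_form (- y, x) = face_form (x, y)"
    "edge_form (- y, x) = edge_form (x, y)" for x y :: 'a
    unfolding vertex_form.simps face_form.simps edge_form.simps by algebra+
  then show ?thesis unfolding klein_covariant_def Umat_def by auto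
qed

lemma klein_covariant_Smat:
  assumes "\<zeta>^5 = 1"
  shows "klein_covariant (Smat \<zeta>)"
proof -
  have "vertex_form (\<zeta> * x, y) = \<zeta>^6 * vertex_form (x, y)"
    "face_form (\<zeta> * x, y) = \<zeta>^10 * face_form (x, y)"
    "edge_form (\<zeta> * x, y) = \<zeta>^15 * edge_form (x, y)" for x y
    using assms unfolding vertex_form.simps face_form.simps edge_form.simps by algebra+
  moreover have "\<zeta> \<noteq> 0" using assms by auto
  ultimately show ?thesis unfolding klein_covariant_def Smat_def by auto
qed

lemma klein_covariant_Tmat:
  fixes \<zeta> :: "'a::field"
  assumes "sqrt5 \<zeta> ^ 2 = 5" "(2::'a) \<noteq> 0" "(5::'a) \<noteq> 0"
  shows "klein_covariant (Tmat \<zeta>)"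
proof -
  define q where "q = 1 + sqrt5 \<zeta>"
  have "q^2 = 1 + 2 * sqrt5 \<zeta> + sqrt5 \<zeta> ^ 2" unfolding q_def by algebra
  then have q: "q^2 = 2 * q + 4" using assms(1) unfolding q_def by simp
  have det: "mat2_det (Tmat \<zeta>) = - q * q - 2 * 2" unfolding Tmat_def q_def by simp
  have "(- q * q - 2 * 2) * (2 * q - 12) = 80" using q by algebra
  moreover have "(2::'a)^4 * 5 \<noteq> 0"
    using assms(2,3) by (intro no_zero_divisors power_not_zero)
  ultimately have "- q * q - 2 * 2 \<noteq> 0" by auto
  moreover have "vertex_form (- q * x + 2 * y, 2 * x + q * y) = (- q * q - 2 * 2)^6 * vertex_form (x, y)"
    "face_form (- q * x + 2 * y, 2 * x + q * y) = (- q * q - 2 * 2)^10 * face_form (x, y)"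
    "edge_form (- q * x + 2 * y, 2 * x + q * y) = (- q * q - 2 * 2)^15 * edge_form (x, y)" for x y
    using q unfolding vertex_form.simps face_form.simps edge_form.simps by algebra+
  moreover have "mat2_app (Tmat \<zeta>) (x, y) = (- q * x + 2 * y, 2 * x + q * y)" for x y
    unfolding Tmat_def q_def by simp
  ultimately show ?thesis unfolding klein_covariant_def det by auto
qed

lemma klein_covariant_G60mats:
  fixes \<zeta> :: "'a::field"
  assumes "\<zeta>^5 = 1" "\<zeta> \<noteq> 1" "(2::'a) \<noteq> 0" "(5::'a) \<noteq> 0"
    and "M \<in> G60mats \<zeta>"
  shows "klein_covariant M"
  using assms(5)
proof induction
  case G60_id
  show ?case by (rule klein_covariant_Imat)
next
  case (G60_S M)
  then show ?case using klein_covariant_mmul klein_covariant_Smat[OF assms(1)] by blast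
next
  case (G60_T M)
  have "klein_covariant (Tmat \<zeta>)"
    using klein_covariant_Tmat sqrt5_squared[OF cyclotomic5[OF assms(1,2)]] assms(3,4) by blast
  then show ?case using klein_covariant_mmul G60_T.IH by blast
qed

lemma zeta_power_CHAR:
  fixes \<zeta> :: "'a::comm_ring_1"
  assumes "CHAR('a) mod 5 = 4" "\<zeta>^5 = 1"
  shows "\<zeta> ^ CHAR('a) = \<zeta>^4"
proof -
  have "CHAR('a) = 5 * (CHAR('a) div 5) + 4" using assms(1) by presburger
  then have "\<zeta> ^ CHAR('a) = (\<zeta>^5) ^ (CHAR('a) div 5) * \<zeta>^4"
    by (metis power_add power_mult)
  then show ?thesis using assms(2) by simp
qed

lemma sqrt5_power_CHAR:
  fixes \<zeta> :: "'a::field"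
  assumes "prime CHAR('a)" "CHAR('a) mod 5 = 4" "\<zeta>^5 = 1"
  shows "sqrt5 \<zeta> ^ CHAR('a) = sqrt5 \<zeta>"
proof -
  let ?p = "CHAR('a)"
  have add: "(x + y) ^ ?p = x ^ ?p + y ^ ?p" for x y :: 'a
    by (rule freshmans_dream[OF assms(1) refl])
  have neg: "(- x) ^ ?p = - (x ^ ?p)" for x :: 'a
    by (rule minus_power_prime_CHAR[OF refl assms(1)])
  have pow: "(\<zeta> ^ k) ^ ?p = (\<zeta>^4) ^ k" for k
    using zeta_power_CHAR[OF assms(2,3)] by (metis power_mult mult.commute)
  have "sqrt5 \<zeta> ^ ?p = \<zeta>^4 - (\<zeta>^4)^2 - (\<zeta>^4)^3 + (\<zeta>^4)^4"
    unfolding sqrt5_def diff_conv_add_uminus add neg pow[of 1, simplified] pow ..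
  also have "\<dots> = sqrt5 \<zeta>"
    unfolding sqrt5_def using assms(3) by algebra
  finally show ?thesis .
qed

abbreviation frobenius_mat2 :: "'a::comm_ring_1 mat2 \<Rightarrow> 'a mat2" where
  "frobenius_mat2 \<equiv> mat2_map (\<lambda>x. x ^ CHAR('a))"

lemma frobenius_mat2_mmul:
  assumes "prime CHAR('a::comm_ring_1)"
  shows "frobenius_mat2 (mmul A B :: 'a mat2) = mmul (frobenius_mat2 A) (frobenius_mat2 B)"
  by (rule mat2_map_mmul) (simp_all add: freshmans_dream[OF assms refl] power_mult_distrib)

lemma frobenius_Smat:
  fixes \<zeta> :: "'a::field"
  assumes "prime CHAR('a)" "CHAR('a) mod 5 = 4" "\<zeta>^5 = 1"
  shows "mmul Umat (frobenius_mat2 (Smat \<zeta>)) = smul2 (\<zeta>^4) (mmul (Smat \<zeta>) Umat)"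
proof -
  have "\<zeta>^4 * \<zeta> = 1" using assms(3) by (simp flip: power_Suc2)
  then show ?thesis
    using prime_gt_0_nat[OF assms(1)] zeta_power_CHAR[OF assms(2,3)]
    by (simp add: Smat_def Umat_def)
qed

lemma frobenius_Tmat:
  fixes \<zeta> :: "'a::field"
  assumes "prime CHAR('a)" "CHAR('a) mod 5 = 4" "\<zeta>^5 = 1"
  shows "frobenius_mat2 (Tmat \<zeta>) = Tmat \<zeta>"
proof -
  have two: "(2::'a) ^ CHAR('a) = 2"
    using of_nat_power_CHAR[OF assms(1), of 2] by simp
  have q: "(1 + sqrt5 \<zeta>) ^ CHAR('a) = 1 + sqrt5 \<zeta>"
    by (simp only: freshmans_dream[OF assms(1) refl] power_one sqrt5_power_CHAR[OF assms])
  have "(- (1 + sqrt5 \<zeta>)) ^ CHAR('a) = - (1 + sqrt5 \<zeta>)"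
    by (simp only: minus_power_prime_CHAR[OF refl assms(1)] q)
  then show ?thesis unfolding Tmat_def by (simp only: mat2_map.simps q two)
qed

lemma Umat_Tmat: "mmul Umat (Tmat \<zeta>) = smul2 (-1) (mmul (Tmat \<zeta>) Umat)"
  by (simp add: Tmat_def Umat_def)

lemma frobenius_G60mats:
  fixes \<zeta> :: "'a::field"
  assumes "prime CHAR('a)" "CHAR('a) mod 5 = 4" "\<zeta>^5 = 1" "M \<in> G60mats \<zeta>"
  shows "\<exists>c. c \<noteq> 0 \<and> frobenius_mat2 M = smul2 c (mmul Umat (mmul M Umat))"
  using assms(4)
proof induction
  case G60_id
  have "frobenius_mat2 (Imat :: 'a mat2) = smul2 (-1) (mmul Umat (mmul Imat Umat))"
    using prime_gt_0_nat[OF assms(1)] by (simp add: Imat_def Umat_def)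
  then show ?case by (intro exI[of _ "-1"]) simp
next
  case (G60_S M)
  then obtain c where c: "c \<noteq> 0" "frobenius_mat2 M = smul2 c (mmul Umat (mmul M Umat))"
    by blast
  have "frobenius_mat2 (mmul M (Smat \<zeta>)) =
      smul2 (c * \<zeta>^4) (mmul Umat (mmul (mmul M (Smat \<zeta>)) Umat))"
    unfolding frobenius_mat2_mmul[OF assms(1)] c(2)
    by (simp add: mmul_assoc mmul_smul2_left mmul_smul2_right smul2_smul2 frobenius_Smat[OF assms(1-3)])
  moreover have "c * \<zeta>^4 \<noteq> 0" using c(1) assms(3) by auto
  ultimately show ?case by blast
next
  case (G60_T M)
  then obtain c where c: "c \<noteq> 0" "frobenius_mat2 M = smul2 c (mmul Umat (mmul M Umat))"
    by blast
  have "frobenius_mat2 (mmul M (Tmat \<zeta>)) =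
      smul2 (- c) (mmul Umat (mmul (mmul M (Tmat \<zeta>)) Umat))"
    unfolding frobenius_mat2_mmul[OF assms(1)] c(2) frobenius_Tmat[OF assms(1-3)]
    by (simp add: mmul_assoc mmul_smul2_left mmul_smul2_right smul2_smul2 Umat_Tmat)
  then show ?case using c(1) by (intro exI[of _ "- c"]) simp
qed

(* (0, -1, 1, 0) is U; since adj M = det M * M^-1 and U^-1 = - U, this is M^-1 U M U^-1 up to a
   scalar. *)
definition U_commutator :: "'a::comm_ring_1 mat2 \<Rightarrow> 'a mat2" where
  "U_commutator M = mmul (mat2_adj M) (mmul (0, -1, 1, 0) (mmul M (0, -1, 1, 0)))"

lemma klein_covariant_U_commutator:
  assumes "klein_covariant M"
  shows "klein_covariant (U_commutator M)"
  unfolding U_commutator_def Umat_def[symmetric]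
  using assms klein_covariant_Umat
  by (intro klein_covariant_mmul klein_covariant_adj)

lemma U_commutator_smul2: "U_commutator (smul2 k A) = smul2 (k^2) (U_commutator A)"
  by (cases A) (simp add: U_commutator_def algebra_simps power2_eq_square)

(* For the ratio rho of the eigenvalues of g, tr^2 / det = rho + 2 + 1 / rho; this is 0, 1 or
   (3 +- sqrt 5) / 2 when g has order 2, 3 or 5 in PGL2. *)
definition order_2_3_5_trace :: "'a::comm_ring_1 \<Rightarrow> 'a mat2 \<Rightarrow> bool" where
  "order_2_3_5_trace s g \<longleftrightarrow>
     (\<exists>c \<in> {0, 2, 3 + s, 3 - s}. 2 * mat2_trace g ^ 2 = c * mat2_det g)"

lemma order_2_3_5_trace_smul2:
  fixes k :: "'a::field"
  assumes "k \<noteq> 0"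
  shows "order_2_3_5_trace s (smul2 k g) \<longleftrightarrow> order_2_3_5_trace s g"
proof -
  have "2 * mat2_trace (smul2 k g) ^ 2 = c * mat2_det (smul2 k g) \<longleftrightarrow>
      2 * mat2_trace g ^ 2 = c * mat2_det g" for c
  proof -
    have "2 * mat2_trace (smul2 k g) ^ 2 = k^2 * (2 * mat2_trace g ^ 2)"
      "c * mat2_det (smul2 k g) = k^2 * (c * mat2_det g)"
      by (simp_all add: mat2_trace_smul2 mat2_det_smul2 power_mult_distrib)
    then show ?thesis using assms by (simp only: mult_cancel_left) simp
  qed
  then show ?thesis unfolding order_2_3_5_trace_def by blast
qed

lemma order_2_3_5_trace_not_parabolic:
  fixes s :: "'a::field"
  assumes "order_2_3_5_trace s g" "s^2 = 5" "mat2_det g \<noteq> 0"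
    and "(2::'a) \<noteq> 0" "(3::'a) \<noteq> 0" "(5::'a) \<noteq> 0"
  shows "mat2_trace g ^ 2 \<noteq> 4 * mat2_det g"
proof
  assume parabolic: "mat2_trace g ^ 2 = 4 * mat2_det g"
  obtain c where "c \<in> {0, 2, 3 + s, 3 - s}" "2 * mat2_trace g ^ 2 = c * mat2_det g"
    using assms(1) unfolding order_2_3_5_trace_def by blast
  then have "8 \<in> {0, 2, 3 + s, (3 - s) :: 'a}"
    using assms(3) unfolding parabolic by simp
  then have zero: "(8 - 0) * (8 - 2) * ((8 - (3 + s)) * (8 - (3 - s))) = (0::'a)"
    by (elim insertE emptyE) (simp_all only: diff_self mult_zero_left mult_zero_right)
  have "(8 - (3 + s)) * (8 - (3 - s)) = (20::'a)"
    using assms(2) by (simp add: algebra_simps power2_eq_square)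
  then have "(8 - 0) * (8 - 2) * 20 = (0::'a)" using zero by (simp only:)
  moreover have "(2::'a) ^ 6 * 3 * 5 \<noteq> 0"
    using assms(4-6) by (intro no_zero_divisors power_not_zero)
  ultimately show False by simp
qed

section \<open>Exact computations in the cyclotomic integers\<close>

(* Cyc5 a0 a1 a2 a3 stands for a0 + a1 zeta + a2 zeta^2 + a3 zeta^3 in Z[zeta], zeta a primitive
   fifth root of unity; cyc5_reduce c0 c1 c2 c3 c4 stands for c0 + c1 zeta + ... + c4 zeta^4,
   rewritten with zeta^4 = - 1 - zeta - zeta^2 - zeta^3.  In a product the terms of degree 5 and 6
   are folded back into degree 0 and 1. *)
datatype cyc5 = Cyc5 int int int int

fun cyc5_reduce :: "int \<Rightarrow> int \<Rightarrow> int \<Rightarrow> int \<Rightarrow> int \<Rightarrow> cyc5" where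
  "cyc5_reduce c0 c1 c2 c3 c4 = Cyc5 (c0 - c4) (c1 - c4) (c2 - c4) (c3 - c4)"

instantiation cyc5 :: comm_ring_1
begin

definition zero_cyc5 :: cyc5 where "0 = Cyc5 0 0 0 0"

definition one_cyc5 :: cyc5 where "1 = Cyc5 1 0 0 0"

fun plus_cyc5 :: "cyc5 \<Rightarrow> cyc5 \<Rightarrow> cyc5" where
  "Cyc5 a0 a1 a2 a3 + Cyc5 b0 b1 b2 b3 = Cyc5 (a0 + b0) (a1 + b1) (a2 + b2) (a3 + b3)"

fun uminus_cyc5 :: "cyc5 \<Rightarrow> cyc5" where
  "- Cyc5 a0 a1 a2 a3 = Cyc5 (- a0) (- a1) (- a2) (- a3)"

fun minus_cyc5 :: "cyc5 \<Rightarrow> cyc5 \<Rightarrow> cyc5" where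
  "Cyc5 a0 a1 a2 a3 - Cyc5 b0 b1 b2 b3 = Cyc5 (a0 - b0) (a1 - b1) (a2 - b2) (a3 - b3)"

fun times_cyc5 :: "cyc5 \<Rightarrow> cyc5 \<Rightarrow> cyc5" where
  "Cyc5 a0 a1 a2 a3 * Cyc5 b0 b1 b2 b3 =
     cyc5_reduce (a0*b0 + a2*b3 + a3*b2) (a0*b1 + a1*b0 + a3*b3) (a0*b2 + a1*b1 + a2*b0)
       (a0*b3 + a1*b2 + a2*b1 + a3*b0) (a1*b3 + a2*b2 + a3*b1)"

instance
proof
  fix x y z :: cyc5
  show "x * y * z = x * (y * z)"
    by (cases x; cases y; cases z) (simp add: algebra_simps)
  show "x * y = y * x"
    by (cases x; cases y) (simp add: algebra_simps)
  show "1 * x = x"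
    by (cases x) (simp add: one_cyc5_def)
  show "x + y + z = x + (y + z)"
    by (cases x; cases y; cases z) simp
  show "x + y = y + x"
    by (cases x; cases y) simp
  show "0 + x = x"
    by (cases x) (simp add: zero_cyc5_def)
  show "- x + x = 0"
    by (cases x) (simp add: zero_cyc5_def)
  show "x - y = x + - y"
    by (cases x; cases y) simp
  show "(x + y) * z = x * z + y * z"
    by (cases x; cases y; cases z) (simp add: algebra_simps)
  show "(0::cyc5) \<noteq> 1"
    by (simp add: zero_cyc5_def one_cyc5_def)
qed

end

fun cyc5_eval :: "'a::comm_ring_1 \<Rightarrow> cyc5 \<Rightarrow> 'a" where
  "cyc5_eval \<zeta> (Cyc5 a0 a1 a2 a3) = of_int a0 + of_int a1 * \<zeta> + of_int a2 * \<zeta>^2 + of_int a3 * \<zeta>^3"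

lemma cyc5_eval_add [simp]: "cyc5_eval \<zeta> (x + y) = cyc5_eval \<zeta> x + cyc5_eval \<zeta> y"
  by (cases x; cases y) (simp add: algebra_simps)

lemma cyc5_eval_uminus [simp]: "cyc5_eval \<zeta> (- x) = - cyc5_eval \<zeta> x"
  by (cases x) (simp add: algebra_simps)

lemma cyc5_eval_diff [simp]: "cyc5_eval \<zeta> (x - y) = cyc5_eval \<zeta> x - cyc5_eval \<zeta> y"
  by (cases x; cases y) (simp add: algebra_simps)

lemma cyc5_eval_0 [simp]: "cyc5_eval \<zeta> 0 = 0"
  by (simp add: zero_cyc5_def)

lemma cyc5_eval_1 [simp]: "cyc5_eval \<zeta> 1 = 1"
  by (simp add: one_cyc5_def)

lemma cyc5_eval_of_nat [simp]: "cyc5_eval \<zeta> (of_nat n) = of_nat n"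
  by (induction n) simp_all

lemma cyc5_eval_numeral [simp]: "cyc5_eval \<zeta> (numeral n) = numeral n"
  using cyc5_eval_of_nat[of \<zeta> "numeral n"] by simp

lemma cyc5_eval_mult:
  fixes \<zeta> :: "'a::idom"
  assumes "\<zeta>^4 + \<zeta>^3 + \<zeta>^2 + \<zeta> + 1 = 0"
  shows "cyc5_eval \<zeta> (x * y) = cyc5_eval \<zeta> x * cyc5_eval \<zeta> y"
proof -
  have reduce: "(a0*b0 + a2*b3 + a3*b2 - (a1*b3 + a2*b2 + a3*b1))
      + (a0*b1 + a1*b0 + a3*b3 - (a1*b3 + a2*b2 + a3*b1)) * \<zeta>
      + (a0*b2 + a1*b1 + a2*b0 - (a1*b3 + a2*b2 + a3*b1)) * \<zeta>^2
      + (a0*b3 + a1*b2 + a2*b1 + a3*b0 - (a1*b3 + a2*b2 + a3*b1)) * \<zeta>^3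
      = (a0 + a1 * \<zeta> + a2 * \<zeta>^2 + a3 * \<zeta>^3) * (b0 + b1 * \<zeta> + b2 * \<zeta>^2 + b3 * \<zeta>^3)"
    for a0 a1 a2 a3 b0 b1 b2 b3 :: 'a
    using assms by algebra
  show ?thesis
    by (cases x; cases y) (simp only: times_cyc5.simps cyc5_reduce.simps cyc5_eval.simps
        of_int_add of_int_mult of_int_diff reduce)
qed

(* The product of the conjugates of a under zeta \<mapsto> zeta^2, zeta^3, zeta^4; multiplied by a it
   gives the norm of a, an integer. *)
fun cyc5_norm_cofactor :: "cyc5 \<Rightarrow> cyc5" where
  "cyc5_norm_cofactor (Cyc5 a0 a1 a2 a3) =
     cyc5_reduce a0 a3 a1 0 a2 * cyc5_reduce a0 a2 0 a1 a3 * cyc5_reduce a0 0 a3 a2 a1"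

definition cyc5_nonzero_cert :: "cyc5 \<Rightarrow> bool" where
  "cyc5_nonzero_cert a \<longleftrightarrow>
     (case a * cyc5_norm_cofactor a of Cyc5 n b c d \<Rightarrow> b = 0 \<and> c = 0 \<and> d = 0 \<and> n dvd 10 ^ 8)"

fun cyc5_proj_cert :: "cyc5 mat2 \<Rightarrow> cyc5 mat2 \<Rightarrow> bool" where
  "cyc5_proj_cert (a, b, c, d) (a', b', c', d') \<longleftrightarrow>
     (let (x, y) = if a' \<noteq> 0 then (a, a') else (b, b') in
      cyc5_nonzero_cert x \<and> cyc5_nonzero_cert y \<and> smul2 y (a, b, c, d) = smul2 x (a', b', c', d'))"

definition cyc5_sqrt5 :: cyc5 where
  "cyc5_sqrt5 = Cyc5 (-1) 0 (-2) (-2)"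

definition cyc5_I :: "cyc5 mat2" where
  "cyc5_I = (Cyc5 1 0 0 0, Cyc5 0 0 0 0, Cyc5 0 0 0 0, Cyc5 1 0 0 0)"

definition cyc5_S :: "cyc5 mat2" where
  "cyc5_S = (Cyc5 0 1 0 0, Cyc5 0 0 0 0, Cyc5 0 0 0 0, Cyc5 1 0 0 0)"

definition cyc5_T :: "cyc5 mat2" where
  "cyc5_T = (Cyc5 0 0 2 2, Cyc5 2 0 0 0, Cyc5 2 0 0 0, Cyc5 0 0 (-2) (-2))"

definition cyc5_U :: "cyc5 mat2" where
  "cyc5_U = (Cyc5 0 0 0 0, Cyc5 (-1) 0 0 0, Cyc5 1 0 0 0, Cyc5 0 0 0 0)"

(* Representatives of the 60 elements of G60 (modulo scalars), the first four representing H.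
   G60_rep_successors lists, for each representative L, the positions of the representatives of
   L S and L T. *)
definition G60_reps :: "cyc5 mat2 list" where
  "G60_reps = [cyc5_I, cyc5_T, cyc5_U, mmul cyc5_T cyc5_U,
    (Cyc5 0 1 0 0, Cyc5 0 0 0 0, Cyc5 0 0 0 0, Cyc5 1 0 0 0),
    (Cyc5 (-1) (-1) (-1) 0, Cyc5 1 0 0 0, Cyc5 0 1 0 0, Cyc5 0 0 (-1) (-1)),
    (Cyc5 0 0 0 0, Cyc5 (-1) 0 0 0, Cyc5 0 1 0 0, Cyc5 0 0 0 0),
    (Cyc5 0 1 0 0, Cyc5 0 0 (-1) (-1), Cyc5 1 1 1 0, Cyc5 (-1) 0 0 0),
    (Cyc5 0 0 1 0, Cyc5 0 0 0 0, Cyc5 0 0 0 0, Cyc5 1 0 0 0),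
    (Cyc5 (-1) (-1) (-1) 0, Cyc5 0 1 0 0, Cyc5 1 0 0 0, Cyc5 0 0 (-1) (-1)),
    (Cyc5 0 (-1) (-1) (-1), Cyc5 1 0 0 0, Cyc5 0 0 1 0, Cyc5 0 0 (-1) (-1)),
    (Cyc5 2 2 1 0, Cyc5 (-1) (-1) (-2) (-1), Cyc5 (-1) (-1) (-2) (-1), Cyc5 1 1 (-1) (-1)),
    (Cyc5 0 0 0 0, Cyc5 (-1) 0 0 0, Cyc5 0 0 1 0, Cyc5 0 0 0 0),
    (Cyc5 (-1) 0 0 0, Cyc5 0 0 1 1, Cyc5 (-1) (-1) (-1) 0, Cyc5 0 1 0 0),
    (Cyc5 0 0 1 0, Cyc5 0 0 (-1) (-1), Cyc5 0 1 1 1, Cyc5 (-1) 0 0 0),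
    (Cyc5 (-1) (-1) (-2) (-1), Cyc5 1 1 (-1) (-1), Cyc5 (-2) (-2) (-1) 0, Cyc5 1 1 2 1),
    (Cyc5 0 0 0 1, Cyc5 0 0 0 0, Cyc5 0 0 0 0, Cyc5 1 0 0 0),
    (Cyc5 0 (-1) (-1) (-1), Cyc5 0 0 1 0, Cyc5 1 0 0 0, Cyc5 0 0 (-1) (-1)),
    (Cyc5 0 (-1) (-1) (-1), Cyc5 0 1 0 0, Cyc5 0 1 0 0, Cyc5 0 0 (-1) (-1)),
    (Cyc5 1 1 0 0, Cyc5 1 0 0 0, Cyc5 0 0 0 1, Cyc5 0 0 (-1) (-1)),
    (Cyc5 1 1 2 1, Cyc5 0 (-1) (-2) (-2), Cyc5 0 (-1) (-2) (-2), Cyc5 1 0 0 (-1)),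
    (Cyc5 0 2 2 1, Cyc5 (-1) (-1) (-2) (-1), Cyc5 1 0 0 (-1), Cyc5 1 1 (-1) (-1)),
    (Cyc5 0 0 0 0, Cyc5 (-1) 0 0 0, Cyc5 0 0 0 1, Cyc5 0 0 0 0),
    (Cyc5 (-1) 0 0 0, Cyc5 0 0 1 1, Cyc5 0 (-1) (-1) (-1), Cyc5 0 0 1 0),
    (Cyc5 0 (-1) 0 0, Cyc5 0 0 1 1, Cyc5 0 (-1) (-1) (-1), Cyc5 0 1 0 0),
    (Cyc5 0 0 0 1, Cyc5 0 0 (-1) (-1), Cyc5 (-1) (-1) 0 0, Cyc5 (-1) 0 0 0),
    (Cyc5 0 (-1) (-2) (-2), Cyc5 1 0 0 (-1), Cyc5 (-1) (-1) (-2) (-1), Cyc5 0 1 2 2),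
    (Cyc5 1 0 0 (-1), Cyc5 1 1 (-1) (-1), Cyc5 0 (-2) (-2) (-1), Cyc5 1 1 2 1),
    (Cyc5 (-1) (-1) (-1) (-1), Cyc5 0 0 0 0, Cyc5 0 0 0 0, Cyc5 1 0 0 0),
    (Cyc5 1 1 0 0, Cyc5 0 0 0 1, Cyc5 1 0 0 0, Cyc5 0 0 (-1) (-1)),
    (Cyc5 1 1 0 0, Cyc5 0 0 1 0, Cyc5 0 1 0 0, Cyc5 0 0 (-1) (-1)),
    (Cyc5 1 1 0 0, Cyc5 0 1 0 0, Cyc5 0 0 1 0, Cyc5 0 0 (-1) (-1)),
    (Cyc5 0 2 2 1, Cyc5 1 0 0 (-1), Cyc5 (-1) (-1) (-2) (-1), Cyc5 1 1 (-1) (-1)),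
    (Cyc5 0 (-1) 0 1, Cyc5 1 1 (-1) (-1), Cyc5 1 1 (-1) (-1), Cyc5 1 0 (-1) 0),
    (Cyc5 (-1) 0 0 1, Cyc5 0 (-1) (-2) (-2), Cyc5 2 2 1 0, Cyc5 1 0 0 (-1)),
    (Cyc5 (-1) (-1) 1 1, Cyc5 (-1) (-1) (-2) (-1), Cyc5 1 2 1 1, Cyc5 1 1 (-1) (-1)),
    (Cyc5 0 0 0 0, Cyc5 (-1) 0 0 0, Cyc5 (-1) (-1) (-1) (-1), Cyc5 0 0 0 0),
    (Cyc5 (-1) 0 0 0, Cyc5 0 0 1 1, Cyc5 1 1 0 0, Cyc5 0 0 0 1),
    (Cyc5 0 (-1) 0 0, Cyc5 0 0 1 1, Cyc5 1 1 0 0, Cyc5 0 0 1 0),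
    (Cyc5 0 0 (-1) 0, Cyc5 0 0 1 1, Cyc5 1 1 0 0, Cyc5 0 1 0 0),
    (Cyc5 1 1 2 1, Cyc5 (-1) (-1) 1 1, Cyc5 0 2 2 1, Cyc5 1 0 0 (-1)),
    (Cyc5 1 1 (-1) (-1), Cyc5 1 0 (-1) 0, Cyc5 0 1 0 (-1), Cyc5 (-1) (-1) 1 1),
    (Cyc5 2 2 1 0, Cyc5 1 0 0 (-1), Cyc5 1 0 0 (-1), Cyc5 0 1 2 2),
    (Cyc5 1 2 1 1, Cyc5 1 1 (-1) (-1), Cyc5 1 1 (-1) (-1), Cyc5 1 1 2 1),
    (Cyc5 0 1 1 0, Cyc5 0 0 0 1, Cyc5 0 1 0 0, Cyc5 0 0 (-1) (-1)),
    (Cyc5 0 1 1 0, Cyc5 0 0 1 0, Cyc5 0 0 1 0, Cyc5 0 0 (-1) (-1)),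
    (Cyc5 (-1) (-1) 1 1, Cyc5 1 2 1 1, Cyc5 (-1) (-1) (-2) (-1), Cyc5 1 1 (-1) (-1)),
    (Cyc5 0 1 1 0, Cyc5 0 1 0 0, Cyc5 0 0 0 1, Cyc5 0 0 (-1) (-1)),
    (Cyc5 (-1) 0 0 1, Cyc5 2 2 1 0, Cyc5 0 (-1) (-2) (-2), Cyc5 1 0 0 (-1)),
    (Cyc5 (-1) (-1) (-2) (-1), Cyc5 1 1 (-1) (-1), Cyc5 1 2 2 0, Cyc5 1 0 (-1) 0),
    (Cyc5 (-1) (-2) (-1) (-1), Cyc5 0 (-1) (-2) (-2), Cyc5 0 2 2 1, Cyc5 1 0 0 (-1)),
    (Cyc5 1 0 (-3) (-3), Cyc5 0 (-1) (-3) (-1), Cyc5 (-1) (-3) (-1) 0, Cyc5 3 3 0 (-1)),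
    (Cyc5 (-1) (-2) (-2) 0, Cyc5 (-1) (-1) (-2) (-1), Cyc5 (-1) 0 1 0, Cyc5 1 1 (-1) (-1)),
    (Cyc5 1 0 (-3) (-3), Cyc5 (-1) (-3) (-1) 0, Cyc5 0 (-1) (-3) (-1), Cyc5 3 3 0 (-1)),
    (Cyc5 0 (-1) 0 0, Cyc5 0 0 1 1, Cyc5 0 1 1 0, Cyc5 0 0 0 1),
    (Cyc5 1 1 2 1, Cyc5 (-1) (-1) 1 1, Cyc5 (-1) (-1) 1 1, Cyc5 1 2 1 1),
    (Cyc5 0 0 0 (-1), Cyc5 0 0 1 1, Cyc5 0 1 1 0, Cyc5 0 1 0 0),
    (Cyc5 1 2 2 0, Cyc5 1 0 (-1) 0, Cyc5 1 1 2 1, Cyc5 (-1) (-1) 1 1),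
    (Cyc5 (-1) (-3) (-1) 0, Cyc5 3 3 0 (-1), Cyc5 (-1) 0 3 3, Cyc5 0 1 3 1),
    (Cyc5 (-1) 0 1 0, Cyc5 1 1 (-1) (-1), Cyc5 1 2 2 0, Cyc5 1 1 2 1)]"

definition G60_rep_successors :: "(nat \<times> nat) list" where
  "G60_rep_successors =
    [(4, 1), (5, 0), (6, 3), (7, 2), (8, 9), (10, 11), (12, 13), (14, 15), (16, 17), (18, 4),
     (19, 20), (21, 5), (22, 23), (24, 6), (25, 26), (27, 7), (28, 29), (30, 8), (31, 32), (32, 33),
     (34, 10), (35, 28), (36, 37), (38, 12), (39, 40), (40, 41), (42, 14), (43, 36), (0, 21), (44, 16),
     (45, 46), (47, 48), (1, 18), (49, 19), (50, 51), (52, 53), (2, 27), (54, 22), (48, 55), (56, 45),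
     (3, 24), (57, 25), (53, 58), (59, 50), (26, 57), (41, 39), (9, 30), (46, 56), (33, 31), (23, 54),
     (37, 43), (11, 34), (51, 59), (29, 35), (20, 49), (13, 38), (55, 47), (17, 44), (15, 42), (58, 52)]"

lemma G60_reps_closed:
  "length G60_rep_successors = length G60_reps \<and>
   (\<forall>(L, i, j) \<in> set (zip G60_reps G60_rep_successors).
      i < length G60_reps \<and> j < length G60_reps \<and>
      cyc5_proj_cert (mmul L cyc5_S) (G60_reps ! i) \<and> cyc5_proj_cert (mmul L cyc5_T) (G60_reps ! j))"
  by code_simp

lemma G60_reps_U_commutator:
  "\<forall>L \<in> set (drop 4 G60_reps). order_2_3_5_trace cyc5_sqrt5 (U_commutator L)"
  by code_simp

lemma G60_reps_successors:
  assumes "L \<in> set G60_reps"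
  shows "\<exists>L' \<in> set G60_reps. cyc5_proj_cert (mmul L cyc5_S) L'"
    and "\<exists>L' \<in> set G60_reps. cyc5_proj_cert (mmul L cyc5_T) L'"
proof -
  obtain n where n: "n < length G60_reps" "L = G60_reps ! n"
    using assms by (auto simp: in_set_conv_nth)
  obtain i j where "G60_rep_successors ! n = (i, j)" by (cases "G60_rep_successors ! n")
  then have "(L, i, j) \<in> set (zip G60_reps G60_rep_successors)"
    using n G60_reps_closed by (metis in_set_zip fst_conv snd_conv)
  then have ij: "i < length G60_reps" "j < length G60_reps"
    and "cyc5_proj_cert (mmul L cyc5_S) (G60_reps ! i)" "cyc5_proj_cert (mmul L cyc5_T) (G60_reps ! j)"
    using G60_reps_closed by blast+
  then show "\<exists>L' \<in> set G60_reps. cyc5_proj_cert (mmul L cyc5_S) L'"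
    "\<exists>L' \<in> set G60_reps. cyc5_proj_cert (mmul L cyc5_T) L'"
    using nth_mem[OF ij(1)] nth_mem[OF ij(2)] by blast+
qed

section \<open>Reduction modulo a prime congruent to 4 mod 5\<close>

locale icosahedral_reduction =
  fixes \<zeta> :: "'a::field"
  assumes zeta_pow_5: "\<zeta>^5 = 1" and zeta_neq_1: "\<zeta> \<noteq> 1"
    and prime_CHAR: "prime CHAR('a)" and CHAR_mod_5: "CHAR('a) mod 5 = 4"
begin

lemma cyclotomic: "\<zeta>^4 + \<zeta>^3 + \<zeta>^2 + \<zeta> + 1 = 0"
  by (rule cyclotomic5[OF zeta_pow_5 zeta_neq_1])

lemma two_neq_0: "(2::'a) \<noteq> 0"
  and three_neq_0: "(3::'a) \<noteq> 0"
  and five_neq_0: "(5::'a) \<noteq> 0"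
proof -
  have "prime (3::nat)" "prime (5::nat)" by (simp_all add: prime_iff)
  moreover have "CHAR('a) \<notin> {2, 3, 5}" using CHAR_mod_5 by auto
  ultimately show "(2::'a) \<noteq> 0" "(3::'a) \<noteq> 0" "(5::'a) \<noteq> 0"
    using of_nat_prime_neq_0[OF prime_CHAR, of 2] of_nat_prime_neq_0[OF prime_CHAR, of 3]
      of_nat_prime_neq_0[OF prime_CHAR, of 5]
    by auto
qed

lemma klein_covariant_G60: "M \<in> G60mats \<zeta> \<Longrightarrow> klein_covariant M"
  using klein_covariant_G60mats zeta_pow_5 zeta_neq_1 two_neq_0 five_neq_0 by blast

abbreviation cyc5_mat_eval :: "cyc5 mat2 \<Rightarrow> 'a mat2" where
  "cyc5_mat_eval \<equiv> mat2_map (cyc5_eval \<zeta>)"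

lemmas cyc5_eval_mult_zeta [simp] = cyc5_eval_mult[OF cyclotomic]

lemma cyc5_eval_power [simp]: "cyc5_eval \<zeta> (x ^ n) = cyc5_eval \<zeta> x ^ n"
  by (induction n) simp_all

lemma cyc5_mat_eval_mmul: "cyc5_mat_eval (mmul A B) = mmul (cyc5_mat_eval A) (cyc5_mat_eval B)"
  by (rule mat2_map_mmul) simp_all

lemma cyc5_mat_eval_smul2: "cyc5_mat_eval (smul2 k A) = smul2 (cyc5_eval \<zeta> k) (cyc5_mat_eval A)"
  by (cases A) simp

lemma cyc5_mat_eval_U_commutator:
  "cyc5_mat_eval (U_commutator L) = U_commutator (cyc5_mat_eval L)"
  unfolding U_commutator_def by (cases L) simp

lemma cyc5_mat_eval_generators:
  "cyc5_mat_eval cyc5_I = Imat" "cyc5_mat_eval cyc5_S = Smat \<zeta>"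
  "cyc5_mat_eval cyc5_T = Tmat \<zeta>" "cyc5_mat_eval cyc5_U = Umat"
proof -
  have "2 * \<zeta>^2 + 2 * \<zeta>^3 = - (1 + sqrt5 \<zeta>)" "- 2 * \<zeta>^2 - 2 * \<zeta>^3 = 1 + sqrt5 \<zeta>"
    using cyclotomic unfolding sqrt5_def by algebra+
  then show "cyc5_mat_eval cyc5_I = Imat" "cyc5_mat_eval cyc5_S = Smat \<zeta>"
    "cyc5_mat_eval cyc5_T = Tmat \<zeta>" "cyc5_mat_eval cyc5_U = Umat"
    by (simp_all add: cyc5_I_def cyc5_S_def cyc5_T_def cyc5_U_def Imat_def Smat_def Tmat_def Umat_def)
qed

lemma cyc5_eval_sqrt5: "cyc5_eval \<zeta> cyc5_sqrt5 = sqrt5 \<zeta>"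
  using cyclotomic unfolding cyc5_sqrt5_def sqrt5_def by simp algebra

lemma cyc5_nonzero_cert_sound:
  assumes "cyc5_nonzero_cert a"
  shows "cyc5_eval \<zeta> a \<noteq> 0"
proof -
  obtain n b c d where prod: "a * cyc5_norm_cofactor a = Cyc5 n b c d"
    by (cases "a * cyc5_norm_cofactor a")
  with assms have "b = 0" "c = 0" "d = 0" "n dvd 10 ^ 8"
    unfolding cyc5_nonzero_cert_def by simp_all
  then obtain m where "10 ^ 8 = n * m" by blast
  then have "(of_int n :: 'a) * of_int m = 10 ^ 8"
    by (metis of_int_mult of_int_numeral of_int_power)
  moreover have "(10::'a) ^ 8 \<noteq> 0"
    using no_zero_divisors[OF two_neq_0 five_neq_0] by (intro power_not_zero) simp
  ultimately have "(of_int n :: 'a) \<noteq> 0" by auto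
  moreover have "cyc5_eval \<zeta> a * cyc5_eval \<zeta> (cyc5_norm_cofactor a) = of_int n"
    using arg_cong[OF prod, of "cyc5_eval \<zeta>"] \<open>b = 0\<close> \<open>c = 0\<close> \<open>d = 0\<close> by simp
  ultimately show ?thesis by auto
qed

lemma cyc5_proj_cert_sound:
  assumes "cyc5_proj_cert A B"
  shows "\<exists>k. k \<noteq> 0 \<and> cyc5_mat_eval A = smul2 k (cyc5_mat_eval B)"
proof -
  obtain a b c d a' b' c' d' where AB: "A = (a, b, c, d)" "B = (a', b', c', d')"
    by (cases A; cases B)
  define x y where "x = (if a' \<noteq> 0 then a else b)" and "y = (if a' \<noteq> 0 then a' else b')"
  have cert: "cyc5_nonzero_cert x" "cyc5_nonzero_cert y" and eq: "smul2 y A = smul2 x B"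
    using assms unfolding AB x_def y_def by (cases "a' = 0"; simp add: Let_def)+
  have x: "cyc5_eval \<zeta> x \<noteq> 0" and y: "cyc5_eval \<zeta> y \<noteq> 0"
    using cyc5_nonzero_cert_sound[OF cert(1)] cyc5_nonzero_cert_sound[OF cert(2)] .
  have "smul2 (cyc5_eval \<zeta> y) (cyc5_mat_eval A) = smul2 (cyc5_eval \<zeta> x) (cyc5_mat_eval B)"
    using arg_cong[OF eq, of cyc5_mat_eval] unfolding cyc5_mat_eval_smul2 .
  then have "cyc5_mat_eval A = smul2 (cyc5_eval \<zeta> x / cyc5_eval \<zeta> y) (cyc5_mat_eval B)"
    using y by (intro smul2_cancel_left)
  then show ?thesis using x y by (intro exI[of _ "cyc5_eval \<zeta> x / cyc5_eval \<zeta> y"]) simp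
qed

lemma proportional_rep_mmul:
  assumes "M = smul2 k (cyc5_mat_eval L)" "k \<noteq> 0" "cyc5_proj_cert (mmul L G) L'"
  shows "\<exists>k'. k' \<noteq> 0 \<and> mmul M (cyc5_mat_eval G) = smul2 k' (cyc5_mat_eval L')"
proof -
  obtain c where "c \<noteq> 0" "cyc5_mat_eval (mmul L G) = smul2 c (cyc5_mat_eval L')"
    using cyc5_proj_cert_sound[OF assms(3)] by blast
  then show ?thesis using assms(2)
    by (intro exI[of _ "k * c"])
      (simp add: assms(1) mmul_smul2_left smul2_smul2 flip: cyc5_mat_eval_mmul)
qed

lemma G60mats_proportional_rep:
  assumes "M \<in> G60mats \<zeta>"
  shows "\<exists>L \<in> set G60_reps. \<exists>k. k \<noteq> 0 \<and> M = smul2 k (cyc5_mat_eval L)"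
  using assms
proof induction
  case G60_id
  have "cyc5_I \<in> set G60_reps" by (simp add: G60_reps_def)
  then show ?case using cyc5_mat_eval_generators(1) by (intro bexI[of _ cyc5_I] exI[of _ 1]) simp_all
next
  case (G60_S M)
  then obtain L k where L: "L \<in> set G60_reps" "k \<noteq> 0" "M = smul2 k (cyc5_mat_eval L)" by blast
  then obtain L' where "L' \<in> set G60_reps" "cyc5_proj_cert (mmul L cyc5_S) L'"
    using G60_reps_successors(1) by blast
  then show ?case
    using proportional_rep_mmul[OF L(3,2)] cyc5_mat_eval_generators(2) by metis
next
  case (G60_T M)
  then obtain L k where L: "L \<in> set G60_reps" "k \<noteq> 0" "M = smul2 k (cyc5_mat_eval L)" by blast
  then obtain L' where "L' \<in> set G60_reps" "cyc5_proj_cert (mmul L cyc5_T) L'"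
    using G60_reps_successors(2) by blast
  then show ?case
    using proportional_rep_mmul[OF L(3,2)] cyc5_mat_eval_generators(3) by metis
qed

lemma cyc5_mat_eval_order_2_3_5_trace:
  assumes "order_2_3_5_trace cyc5_sqrt5 g"
  shows "order_2_3_5_trace (sqrt5 \<zeta>) (cyc5_mat_eval g)"
proof -
  obtain c where c: "c \<in> {0, 2, 3 + cyc5_sqrt5, 3 - cyc5_sqrt5}"
    "2 * mat2_trace g ^ 2 = c * mat2_det g"
    using assms unfolding order_2_3_5_trace_def by blast
  have "cyc5_eval \<zeta> c \<in> {0, 2, 3 + sqrt5 \<zeta>, 3 - sqrt5 \<zeta>}"
    using c(1) cyc5_eval_sqrt5 by auto
  moreover have "2 * mat2_trace (cyc5_mat_eval g) ^ 2 = cyc5_eval \<zeta> c * mat2_det (cyc5_mat_eval g)"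
    using arg_cong[OF c(2), of "cyc5_eval \<zeta>"] by (cases g) simp
  ultimately show ?thesis unfolding order_2_3_5_trace_def by blast
qed

lemma U_commutator_order_2_3_5:
  assumes "M \<in> G60mats \<zeta>" "\<forall>N \<in> Hmats \<zeta>. \<not> proj_eq M N"
  shows "order_2_3_5_trace (sqrt5 \<zeta>) (U_commutator M)"
proof -
  obtain L k where L: "L \<in> set G60_reps" "k \<noteq> 0" "M = smul2 k (cyc5_mat_eval L)"
    using G60mats_proportional_rep[OF assms(1)] by blast
  have "L \<notin> set (take 4 G60_reps)"
  proof
    assume "L \<in> set (take 4 G60_reps)"
    then have "cyc5_mat_eval L \<in> Hmats \<zeta>"
      by (auto simp: G60_reps_def Hmats_def cyc5_mat_eval_mmul cyc5_mat_eval_generators)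
    moreover have "proj_eq M (cyc5_mat_eval L)" unfolding proj_eq_def using L(2,3) by blast
    ultimately show False using assms(2) by blast
  qed
  then have "L \<in> set (drop 4 G60_reps)"
    using L(1) by (metis append_take_drop_id Un_iff set_append)
  then have "order_2_3_5_trace cyc5_sqrt5 (U_commutator L)"
    using G60_reps_U_commutator by blast
  then have "order_2_3_5_trace (sqrt5 \<zeta>) (U_commutator (cyc5_mat_eval L))"
    unfolding cyc5_mat_eval_U_commutator[symmetric] by (rule cyc5_mat_eval_order_2_3_5_trace)
  then show ?thesis
    unfolding L(3) U_commutator_smul2 using L(2) by (simp add: order_2_3_5_trace_smul2)
qed

lemma U_commutator_eigenvector:
  assumes "M \<in> G60mats \<zeta>" "a \<in> Fprime" "mob_app M a = Some w" "w \<in> Fprime"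
  shows "\<exists>\<mu>. mat2_app (U_commutator M) (a, 1) = scale2 \<mu> (a, 1)"
proof -
  let ?p = "CHAR('a)"
  have Fprime_fixed: "x ^ ?p = x" if "x \<in> Fprime" for x :: 'a
    using that of_int_power_CHAR[OF prime_CHAR] unfolding Fprime_def by auto
  obtain m1 m2 m3 m4 where M: "M = (m1, m2, m3, m4)" by (cases M)
  define P Q where "P = m1 * a + m2" and "Q = m3 * a + m4"
  have PQ: "mat2_app M (a, 1) = (P, Q)" unfolding M P_def Q_def by simp
  have "Q \<noteq> 0" "w = P / Q"
    using assms(3) unfolding M P_def Q_def by (auto split: if_splits)
  obtain c where c: "c \<noteq> 0" "frobenius_mat2 M = smul2 c (mmul Umat (mmul M Umat))"
    using frobenius_G60mats[OF prime_CHAR CHAR_mod_5 zeta_pow_5 assms(1)] by blast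
  have "mat2_app (frobenius_mat2 M) (a, 1) = (P ^ ?p, Q ^ ?p)"
    using Fprime_fixed[OF assms(2)] unfolding M P_def Q_def
    by (simp add: freshmans_dream[OF prime_CHAR refl] power_mult_distrib)
  also have "\<dots> = scale2 (Q ^ ?p / Q) (P, Q)"
    using Fprime_fixed[OF assms(4)] \<open>Q \<noteq> 0\<close> \<open>w = P / Q\<close>
    by (simp add: power_divide field_simps)
  finally have "scale2 c (mat2_app Umat (mat2_app M (mat2_app Umat (a, 1)))) =
      scale2 (Q ^ ?p / Q) (mat2_app M (a, 1))"
    unfolding c(2) PQ by (simp add: mat2_app_smul2 mat2_app_mmul)
  note Frobenius = this
  have "scale2 c (mat2_app (U_commutator M) (a, 1)) =
      mat2_app (mat2_adj M) (scale2 c (mat2_app Umat (mat2_app M (mat2_app Umat (a, 1)))))"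
    by (simp add: U_commutator_def Umat_def[symmetric] mat2_app_mmul mat2_app_scale2)
  also have "\<dots> = scale2 (Q ^ ?p / Q * mat2_det M) (a, 1)"
    unfolding Frobenius by (simp add: mat2_app_scale2 mat2_app_adj scale2_scale2)
  finally have "scale2 c (mat2_app (U_commutator M) (a, 1)) = scale2 (Q ^ ?p / Q * mat2_det M) (a, 1)" .
  then show ?thesis using scale2_cancel_left[OF c(1)] by blast
qed

theorem mob_app_G60mats_not_in_Fprime:
  assumes "j \<noteq> 0" "j \<noteq> 1728" "a \<in> Fprime" "Gpol (a^5) j = 0"
    and "M \<in> G60mats \<zeta>" "\<forall>N \<in> Hmats \<zeta>. \<not> proj_eq M N"
  shows "\<exists>z. mob_app M a = Some z \<and> z \<notin> Fprime"
proof -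
  have fibre: "klein_fibre j (a, 1)" using assms(4) klein_fibre_iff_Gpol by blast
  have cov: "klein_covariant M" using klein_covariant_G60[OF assms(5)] .
  obtain P Q where PQ: "mat2_app M (a, 1) = (P, Q)" by (cases "mat2_app M (a, 1)")
  then have "Q \<noteq> 0" using klein_fibre_mat2_app[OF cov fibre] klein_fibre_snd_nonzero by metis
  then have mob: "mob_app M a = Some (P / Q)" by (rule mob_app_eq_Some[OF PQ])
  moreover have "P / Q \<notin> Fprime"
  proof
    assume "P / Q \<in> Fprime"
    then obtain \<mu> where eigen: "mat2_app (U_commutator M) (a, 1) = scale2 \<mu> (a, 1)"
      using U_commutator_eigenvector[OF assms(5,3) mob] by blast
    have cov': "klein_covariant (U_commutator M)" by (rule klein_covariant_U_commutator[OF cov])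
    then have "mat2_det (U_commutator M) \<noteq> 0" unfolding klein_covariant_def by blast
    then have "mat2_trace (U_commutator M) ^ 2 \<noteq> 4 * mat2_det (U_commutator M)"
      using order_2_3_5_trace_not_parabolic U_commutator_order_2_3_5[OF assms(5,6)]
        sqrt5_squared[OF cyclotomic] two_neq_0 three_neq_0 five_neq_0 by blast
    moreover have "mat2_trace (U_commutator M) ^ 2 = 4 * mat2_det (U_commutator M)"
      using klein_covariant_fixed_point[OF cov' fibre eigen assms(1,2) two_neq_0 five_neq_0] .
    ultimately show False by contradiction
  qed
  ultimately show ?thesis by blast
qed

end

theorem proposition3p3:
  fixes l :: nat and \<zeta> j a1 :: "'a::{field,finite}"
  assumes "prime l" and "l mod 5 = 4"
    and "card (UNIV :: 'a set) = l^2" and "of_nat l = (0::'a)"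
    and "\<zeta>^5 = 1" and "\<zeta> \<noteq> 1"
    and "j \<in> Fprime" and "j \<noteq> 0" and "j \<noteq> 1728"
    and "a1 \<in> Fprime" and "Gpol (a1^5) j = 0"
  shows "\<forall>M \<in> G60mats \<zeta>. (\<forall>N \<in> Hmats \<zeta>. \<not> proj_eq M N) \<longrightarrow>
           (\<exists>z. mob_app M a1 = Some z \<and> z \<notin> Fprime)"
proof -
  have "CHAR('a) dvd l" using assms(4) by (simp add: of_nat_eq_0_iff_char_dvd)
  then have "CHAR('a) = l" using assms(1) CHAR_not_1' by (auto simp: prime_nat_iff)
  then interpret icosahedral_reduction \<zeta>
    using assms(1,2,5,6) by unfold_locales simp_all
  show ?thesis using mob_app_G60mats_not_in_Fprime assms(8-11) by blast
qed

end
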